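(* Let $F$ be a distribution function on $[0,1]$ with a positive, non-increasing, differentiable density $g$ and non-decreasing hazard ratio $g(x)/(1-F(x))$. Let $\{f_{i,j}\}$, $f_{i,j}=f_{j,i}$ ($1\le i\le j\le n$), be independent with distribution $F$. Call $I\subseteq[n]$ a K-set if $f_{i,j}\ge (f_{i,i}+f_{j,j})/2$ for all distinct $i,j\in I$. Say $J\subseteq[n]$, $|J|\ge2$, supports a non-trivial local equilibrium if there exist $p_j>0$ ($j\in J$), $\sum_{j\in J}p_j=1$, such that $\sum_{j\in J}f_{i,j}p_j$ is constant in $i\in J$ and $\sum_{i,j\in J}f_{i,j}x_ix_j\le0$ whenever $\sum_{i\in J}x_i=0$. Fix $\varepsilon>0$ and let $r_n^*=\lceil(2/3+\varepsilon)\log_2 n\rceil$. Then with probability at least $1-\exp\bigl(-\Theta(\varepsilon\log^2 n)\bigr)$ there is no K-set $I$ of cardinality $\ge r_n^*$ such that no proper subset $J\subsetneq I$ with $|J|\ge2$ supports a non-trivial local equilibrium. *)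

theory Defs
  imports "HOL-Probability.Probability"
begin

text \<open>Players are indexed by [n] = {0..<n} (0-based). The independent payoffs
  f_{i,j} = f_{j,i} are indexed by the pairs (i,j) with i \<le> j < n.\<close>

definition pair_index :: "nat \<Rightarrow> (nat \<times> nat) set" where
  "pair_index n = {(i, j). i \<le> j \<and> j < n}"

definition payoff :: "(nat \<times> nat \<Rightarrow> real) \<Rightarrow> nat \<Rightarrow> nat \<Rightarrow> real" where
  "payoff \<omega> i j = \<omega> (min i j, max i j)"

definition dens_measure :: "(real \<Rightarrow> real) \<Rightarrow> real measure" where
  "dens_measure g = density lborel (\<lambda>x. ennreal (g x * indicator {0..1} x))"

definition sample_space :: "(real \<Rightarrow> real) \<Rightarrow> nat \<Rightarrow> (nat \<times> nat \<Rightarrow> real) measure" where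
  "sample_space g n = PiM (pair_index n) (\<lambda>_. dens_measure g)"

definition K_set :: "(nat \<Rightarrow> nat \<Rightarrow> real) \<Rightarrow> nat set \<Rightarrow> bool" where
  "K_set f I \<longleftrightarrow> (\<forall>i\<in>I. \<forall>j\<in>I. i \<noteq> j \<longrightarrow> f i j \<ge> (f i i + f j j) / 2)"

definition supports_nontrivial_local_eq :: "(nat \<Rightarrow> nat \<Rightarrow> real) \<Rightarrow> nat set \<Rightarrow> bool" where
  "supports_nontrivial_local_eq f J \<longleftrightarrow>
     card J \<ge> 2 \<and>
     (\<exists>p :: nat \<Rightarrow> real. (\<forall>j\<in>J. p j > 0) \<and> (\<Sum>j\<in>J. p j) = 1 \<and>
        (\<exists>v. \<forall>i\<in>J. (\<Sum>j\<in>J. f i j * p j) = v) \<and>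
        (\<forall>x :: nat \<Rightarrow> real. (\<Sum>i\<in>J. x i) = 0 \<longrightarrow>
            (\<Sum>i\<in>J. \<Sum>j\<in>J. f i j * x i * x j) \<le> 0))"

definition r_star :: "real \<Rightarrow> nat \<Rightarrow> nat" where
  "r_star \<epsilon> n = nat \<lceil>(2/3 + \<epsilon>) * log 2 (real n)\<rceil>"

definition bad_event :: "real \<Rightarrow> nat \<Rightarrow> (nat \<times> nat \<Rightarrow> real) \<Rightarrow> bool" where
  "bad_event \<epsilon> n \<omega> \<longleftrightarrow>
     (\<exists>I. I \<subseteq> {..<n} \<and> K_set (payoff \<omega>) I \<and> card I \<ge> r_star \<epsilon> n \<and>
        \<not> (\<exists>J. J \<subset> I \<and> card J \<ge> 2 \<and> supports_nontrivial_local_eq (payoff \<omega>) J))"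

end

theory Submission
  imports Defs "HOL-Computational_Algebra.Polynomial"
begin

text \<open>A K-set of size \<open>r\<close> none of whose proper subsets supports a non-trivial local equilibrium
  must be "sandwiched": every off-diagonal entry \<open>f i j\<close> lies between the mean and the maximum of
  \<open>f i i\<close> and \<open>f j j\<close>, for otherwise the pair \<open>{i, j}\<close> itself supports an equilibrium.
  Conditionally on the diagonal, and since the density is non-increasing, each such event has
  probability at most \<open>|F (f i i) - F (f j j)| / 2\<close>. The product of these bounds over all pairs is
  controlled by the discriminant of the points \<open>F (f i i) \<in> [0, 1]\<close>, which Chebyshev polynomials
  bound by \<open>(r!)\<^sup>2 / 4 ^ ((r - 1)\<^sup>2)\<close>. A union bound over the \<open>n choose r\<close> candidate sets gives
  \<open>2 ^ (r log n - 3 r\<^sup>2 / 2 + O(r))\<close>, which for \<open>r = r_n\<^sup>*\<close> is \<open>exp (- \<Theta>(\<epsilon> log\<^sup>2 n))\<close>.\<close>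

fun chebyshev :: "nat \<Rightarrow> real poly" where
  "chebyshev 0 = 1"
| "chebyshev (Suc 0) = [:0, 1:]"
| "chebyshev (Suc (Suc n)) = [:0, 2:] * chebyshev (Suc n) - chebyshev n"

lemma poly_chebyshev_cos: "poly (chebyshev n) (cos t) = cos (real n * t)"
proof (induction n rule: chebyshev.induct)
  case (3 n)
  have "cos (real (Suc (Suc n)) * t) + cos (real n * t) = 2 * cos t * cos (real (Suc n) * t)"
    using cos_add[of "real (Suc n) * t" t] cos_diff[of "real (Suc n) * t" t]
    by (simp add: algebra_simps)
  then show ?case using 3 by (simp add: algebra_simps)
qed auto

lemma degree_coeff_chebyshev:
  "degree (chebyshev n) = n \<and> coeff (chebyshev n) n = 2 ^ (n - 1)"
proof (induction n rule: chebyshev.induct)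
  case (3 n)
  then have IH: "degree (chebyshev (Suc n)) = Suc n" "coeff (chebyshev (Suc n)) (Suc n) = 2 ^ n"
    "degree (chebyshev n) = n" by simp_all
  have deg: "degree ([:0, 2:] * chebyshev (Suc n)) = Suc (Suc n)"
    using IH by (subst degree_mult_eq) auto
  then have "degree ([:0, 2:] * chebyshev (Suc n) - chebyshev n) = Suc (Suc n)"
    using IH degree_add_eq_left[of "- chebyshev n" "[:0, 2:] * chebyshev (Suc n)"] by simp
  moreover have "coeff (chebyshev n) (Suc (Suc n)) = 0"
    using IH by (simp add: coeff_eq_0)
  ultimately show ?case using IH by simp
qed (auto simp: degree_pCons_eq)

lemma abs_poly_chebyshev_le: "\<bar>x\<bar> \<le> 1 \<Longrightarrow> \<bar>poly (chebyshev n) x\<bar> \<le> 1"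
  using poly_chebyshev_cos[of n "arccos x"] by (simp add: cos_arccos_abs)

definition shifted_chebyshev :: "nat \<Rightarrow> real poly" where
  "shifted_chebyshev n = chebyshev n \<circ>\<^sub>p [:-1, 2:]"

lemma abs_poly_shifted_chebyshev_le:
  "0 \<le> y \<Longrightarrow> y \<le> 1 \<Longrightarrow> \<bar>poly (shifted_chebyshev n) y\<bar> \<le> 1"
  unfolding shifted_chebyshev_def by (auto simp: poly_pcompose intro!: abs_poly_chebyshev_le)

lemma degree_shifted_chebyshev: "degree (shifted_chebyshev n) = n"
  unfolding shifted_chebyshev_def by (simp add: degree_pcompose degree_coeff_chebyshev)

lemma lead_coeff_shifted_chebyshev: "lead_coeff (shifted_chebyshev n) = 2 ^ (2 * n - 1)"
proof -
  have "lead_coeff (shifted_chebyshev n) = 2 ^ (n - 1) * 2 ^ n"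
    unfolding shifted_chebyshev_def
    by (subst lead_coeff_comp) (simp_all add: degree_coeff_chebyshev)
  also have "\<dots> = 2 ^ (2 * n - 1)"
    by (cases n) (simp_all add: power_add[symmetric])
  finally show ?thesis .
qed

lemma sum_divided_difference_eq_coeff:
  fixes x :: "'a \<Rightarrow> 'b::field" and p :: "'b poly"
  assumes fin: "finite S" and inj: "inj_on x S" and deg: "degree p < card S"
  shows "(\<Sum>i\<in>S. poly p (x i) / (\<Prod>j\<in>S-{i}. (x i - x j))) = coeff p (card S - 1)"
proof -
  define c where "c i = poly p (x i) / (\<Prod>j\<in>S-{i}. (x i - x j))" for i
  define B where "B i = (\<Prod>j\<in>S-{i}. [:- x j, 1:])" for i
  define L where "L = (\<Sum>i\<in>S. smult (c i) (B i))"
  have degB: "degree (B i) = card S - 1" if "i \<in> S" for i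
    unfolding B_def using that fin by (subst degree_prod_sum_eq) auto
  have lcB: "coeff (B i) (card S - 1) = 1" if "i \<in> S" for i
    using lead_coeff_prod[of "\<lambda>j. [:- x j, 1:]" "S - {i}"] degB[OF that] unfolding B_def by simp
  have polyB: "poly (B i) y = (\<Prod>j\<in>S-{i}. (y - x j))" for i y
    unfolding B_def by (simp add: poly_prod)
  have polyL: "poly L (x k) = poly p (x k)" if k: "k \<in> S" for k
  proof -
    have "poly (B i) (x k) = 0" if "i \<in> S - {k}" for i
      using that k fin by (auto simp: polyB prod_zero_iff)
    then have "poly L (x k) = c k * poly (B k) (x k)"
      unfolding L_def poly_sum using fin k by (simp add: sum.remove)
    moreover have "(\<Prod>j\<in>S-{k}. (x k - x j)) \<noteq> 0"
      using inj k fin by (auto simp: inj_on_def)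
    ultimately show ?thesis by (simp add: c_def polyB)
  qed
  have degL: "degree L \<le> card S - 1"
    unfolding L_def by (rule degree_sum_le) (auto intro: order.trans[OF degree_smult_le] simp: degB fin)
  have "p = L"
  proof (rule ccontr)
    assume "p \<noteq> L"
    then have ne: "p - L \<noteq> 0" by simp
    have "x ` S \<subseteq> {y. poly (p - L) y = 0}" using polyL by auto
    then have "card (x ` S) \<le> card {y. poly (p - L) y = 0}"
      using poly_roots_finite[OF ne] by (rule card_mono[rotated])
    also have "\<dots> \<le> degree (p - L)" by (rule card_poly_roots_bound[OF ne])
    also have "\<dots> \<le> card S - 1" using degL deg by (intro degree_diff_le) auto
    finally show False using card_image[OF inj] deg by simp
  qed
  then have "coeff p (card S - 1) = (\<Sum>i\<in>S. c i * coeff (B i) (card S - 1))"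
    by (simp add: L_def coeff_sum)
  also have "\<dots> = (\<Sum>i\<in>S. c i)" by (rule sum.cong) (simp_all add: lcB del: One_nat_def)
  finally show ?thesis by (simp add: c_def)
qed

definition node_dist_prod :: "('a \<Rightarrow> real) \<Rightarrow> 'a set \<Rightarrow> 'a \<Rightarrow> real" where
  "node_dist_prod x S i = (\<Prod>j\<in>S-{i}. \<bar>x i - x j\<bar>)"

definition node_discriminant :: "('a \<Rightarrow> real) \<Rightarrow> 'a set \<Rightarrow> real" where
  "node_discriminant x S = (\<Prod>i\<in>S. node_dist_prod x S i)"

lemma node_dist_prod_nonneg: "node_dist_prod x S i \<ge> 0"
  unfolding node_dist_prod_def by (simp add: prod_nonneg)

lemma node_discriminant_remove:
  assumes fin: "finite S" and i: "i \<in> S"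
  shows "node_discriminant x S = node_discriminant x (S - {i}) * (node_dist_prod x S i)\<^sup>2"
proof -
  have split: "node_dist_prod x S a = \<bar>x a - x i\<bar> * node_dist_prod x (S - {i}) a" if "a \<in> S - {i}" for a
  proof -
    have "S - {a} = insert i (S - {i} - {a})" using that i by auto
    then show ?thesis unfolding node_dist_prod_def using fin by simp
  qed
  have "node_discriminant x S = node_dist_prod x S i * (\<Prod>a\<in>S-{i}. node_dist_prod x S a)"
    unfolding node_discriminant_def using fin i by (simp add: prod.remove)
  also have "(\<Prod>a\<in>S-{i}. node_dist_prod x S a)
      = (\<Prod>a\<in>S-{i}. \<bar>x a - x i\<bar>) * node_discriminant x (S - {i})"
    unfolding node_discriminant_def by (simp add: split prod.distrib)
  also have "(\<Prod>a\<in>S-{i}. \<bar>x a - x i\<bar>) = node_dist_prod x S i"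
    unfolding node_dist_prod_def by (simp add: abs_minus_commute)
  finally show ?thesis by (simp add: power2_eq_square)
qed

text \<open>The divided difference of the shifted Chebyshev polynomial of degree \<open>m - 1\<close> equals its
  leading coefficient \<open>2 ^ (2m - 3)\<close>, while its values on \<open>[0, 1]\<close> are bounded by \<open>1\<close>.\<close>
lemma sum_inverse_node_dist_prod_ge:
  assumes fin: "finite S" and inj: "inj_on x S" and m: "card S \<ge> 2"
    and rng: "\<And>i. i \<in> S \<Longrightarrow> 0 \<le> x i \<and> x i \<le> 1"
  shows "2 ^ (2 * card S - 3) \<le> (\<Sum>i\<in>S. 1 / node_dist_prod x S i)"
proof -
  let ?T = "shifted_chebyshev (card S - 1)"
  have "(\<Sum>i\<in>S. poly ?T (x i) / (\<Prod>j\<in>S-{i}. (x i - x j))) = coeff ?T (card S - 1)"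
    using m by (intro sum_divided_difference_eq_coeff fin inj) (simp add: degree_shifted_chebyshev)
  also have "\<dots> = 2 ^ (2 * card S - 3)"
    using lead_coeff_shifted_chebyshev[of "card S - 1"] m
    by (simp add: degree_shifted_chebyshev numeral_3_eq_3)
  finally have eq: "(\<Sum>i\<in>S. poly ?T (x i) / (\<Prod>j\<in>S-{i}. (x i - x j))) = 2 ^ (2 * card S - 3)" .
  have "(2::real) ^ (2 * card S - 3) \<le> (\<Sum>i\<in>S. \<bar>poly ?T (x i) / (\<Prod>j\<in>S-{i}. (x i - x j))\<bar>)"
    unfolding eq[symmetric] by (rule order.trans[OF abs_ge_self sum_abs])
  also have "\<dots> \<le> (\<Sum>i\<in>S. 1 / node_dist_prod x S i)"
  proof (rule sum_mono)
    fix i assume i: "i \<in> S"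
    have "\<bar>\<Prod>j\<in>S-{i}. (x i - x j)\<bar> = node_dist_prod x S i"
      unfolding node_dist_prod_def by (simp add: abs_prod)
    moreover have "\<bar>poly ?T (x i)\<bar> \<le> 1" using rng[OF i] abs_poly_shifted_chebyshev_le by auto
    ultimately show "\<bar>poly ?T (x i) / (\<Prod>j\<in>S-{i}. (x i - x j))\<bar> \<le> 1 / node_dist_prod x S i"
      by (simp add: abs_divide divide_right_mono node_dist_prod_nonneg)
  qed
  finally show ?thesis .
qed

lemma min_node_dist_prod_le:
  assumes fin: "finite S" and m: "card S \<ge> 2"
    and rng: "\<And>i. i \<in> S \<Longrightarrow> 0 \<le> x i \<and> x i \<le> 1"
  obtains i where "i \<in> S" "node_dist_prod x S i \<le> card S / 2 ^ (2 * card S - 3)"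
proof (cases "inj_on x S")
  case False
  then obtain i j where ij: "i \<in> S" "j \<in> S" "i \<noteq> j" "x i = x j" by (auto simp: inj_on_def)
  then have "node_dist_prod x S i = 0" unfolding node_dist_prod_def using fin by (intro prod_zero) auto
  with ij that show ?thesis by simp
next
  case True
  have ne: "S \<noteq> {}" using m by auto
  have "Min (node_dist_prod x S ` S) \<in> node_dist_prod x S ` S" using fin ne by simp
  then obtain i where i: "i \<in> S" and iM: "node_dist_prod x S i = Min (node_dist_prod x S ` S)"
    by auto
  have imin: "node_dist_prod x S i \<le> node_dist_prod x S j" if "j \<in> S" for j
    using iM fin that by simp
  have pos: "node_dist_prod x S j > 0" if "j \<in> S" for j
    unfolding node_dist_prod_def using True that fin by (intro prod_pos) (auto simp: inj_on_def)
  have "(2::real) ^ (2 * card S - 3) \<le> (\<Sum>j\<in>S. 1 / node_dist_prod x S j)"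
    using m rng by (intro sum_inverse_node_dist_prod_ge fin True)
  also have "\<dots> \<le> (\<Sum>j\<in>S. 1 / node_dist_prod x S i)"
    by (intro sum_mono divide_left_mono imin mult_pos_pos pos i) auto
  finally have "(2::real) ^ (2 * card S - 3) \<le> card S / node_dist_prod x S i" by simp
  then show ?thesis using that[OF i] pos[OF i] by (simp add: field_simps)
qed


lemma node_discriminant_le:
  assumes "finite S" and "\<And>i. i \<in> S \<Longrightarrow> 0 \<le> x i \<and> x i \<le> 1"
  shows "node_discriminant x S \<le> (fact (card S))\<^sup>2 / 4 ^ ((card S - 1)\<^sup>2)"
  using assms
proof (induction "card S" arbitrary: S)
  case 0
  then show ?case by (simp add: node_discriminant_def)
next
  case (Suc k)
  show ?case
  proof (cases "k = 0")
    case True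
    with Suc.hyps(2) have "card S = 1" by simp
    then obtain a where "S = {a}" by (rule card_1_singletonE)
    then show ?thesis by (simp add: node_discriminant_def node_dist_prod_def)
  next
    case False
    obtain i where i: "i \<in> S" and wi: "node_dist_prod x S i \<le> card S / 2 ^ (2 * card S - 3)"
      using min_node_dist_prod_le[of S x] Suc.hyps(2) Suc.prems False by auto
    have cardi: "card (S - {i}) = k" using Suc.hyps(2) Suc.prems(1) i by simp
    have "node_discriminant x (S - {i}) \<le> (fact (card (S - {i})))\<^sup>2 / 4 ^ ((card (S - {i}) - 1)\<^sup>2)"
      by (rule Suc.hyps(1)) (use cardi Suc.prems in auto)
    then have IH: "node_discriminant x (S - {i}) \<le> (fact k)\<^sup>2 / 4 ^ ((k - 1)\<^sup>2)"
      by (simp only: cardi)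
    obtain j where "k = Suc j" using False not0_implies_Suc by blast
    then have exps: "(k - 1)\<^sup>2 + (2 * Suc k - 3) = k\<^sup>2" by (simp add: power2_eq_square)
    have "node_discriminant x S = node_discriminant x (S - {i}) * (node_dist_prod x S i)\<^sup>2"
      by (rule node_discriminant_remove[OF Suc.prems(1) i])
    also have "\<dots> \<le> ((fact k)\<^sup>2 / 4 ^ ((k - 1)\<^sup>2)) * (card S / 2 ^ (2 * card S - 3))\<^sup>2"
      by (intro mult_mono IH power_mono wi node_dist_prod_nonneg) auto
    also have "\<dots> = (fact (card S))\<^sup>2 / (4 ^ ((k - 1)\<^sup>2) * (2 ^ (2 * card S - 3))\<^sup>2)"
      unfolding Suc.hyps(2)[symmetric] by (simp add: power_divide power_mult_distrib power2_eq_square algebra_simps)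
    also have "((2::real) ^ (2 * card S - 3))\<^sup>2 = 4 ^ (2 * Suc k - 3)"
      unfolding Suc.hyps(2)[symmetric] by (simp add: power2_eq_square power_mult_distrib[symmetric])
    also have "(4::real) ^ ((k - 1)\<^sup>2) * 4 ^ (2 * Suc k - 3) = 4 ^ ((card S - 1)\<^sup>2)"
      unfolding Suc.hyps(2)[symmetric] by (simp only: power_add[symmetric] exps) simp
    finally show ?thesis .
  qed
qed

definition ordered_pairs :: "'a::linorder set \<Rightarrow> ('a \<times> 'a) set" where
  "ordered_pairs I = {(i, j). i \<in> I \<and> j \<in> I \<and> i < j}"

lemma finite_ordered_pairs: "finite I \<Longrightarrow> finite (ordered_pairs I)"
  unfolding ordered_pairs_def by (rule finite_subset[of _ "I \<times> I"]) auto

lemma prod_ordered_pairs_sq: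
  fixes a :: "'a::linorder \<Rightarrow> 'a \<Rightarrow> real"
  assumes fin: "finite I" and sym: "\<And>i j. a i j = a j i"
  shows "(\<Prod>(i, j)\<in>ordered_pairs I. a i j)\<^sup>2 = (\<Prod>i\<in>I. \<Prod>j\<in>I-{i}. a i j)"
proof -
  have "(\<Prod>i\<in>I. \<Prod>j\<in>I-{i}. a i j) = (\<Prod>(i, j)\<in>Sigma I (\<lambda>i. I-{i}). a i j)"
    using fin by (subst prod.Sigma) auto
  also have "Sigma I (\<lambda>i. I-{i}) = ordered_pairs I \<union> prod.swap ` ordered_pairs I"
    unfolding ordered_pairs_def by (auto simp: image_iff)
  also have "(\<Prod>(i, j)\<in>ordered_pairs I \<union> prod.swap ` ordered_pairs I. a i j)
      = (\<Prod>(i, j)\<in>ordered_pairs I. a i j) * (\<Prod>(i, j)\<in>prod.swap ` ordered_pairs I. a i j)"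
    using fin finite_ordered_pairs[OF fin]
    by (intro prod.union_disjoint) (auto simp: ordered_pairs_def)
  also have "(\<Prod>(i, j)\<in>prod.swap ` ordered_pairs I. a i j) = (\<Prod>(i, j)\<in>ordered_pairs I. a i j)"
    by (subst prod.reindex) (auto simp: inj_on_def sym)
  finally show ?thesis by (simp add: power2_eq_square)
qed

definition sandwich_bound :: "nat \<Rightarrow> real" where
  "sandwich_bound r = fact r / (2 ^ ((r - 1)\<^sup>2) * 2 ^ (r * (r - 1) div 2))"

lemma sandwich_bound_nonneg: "sandwich_bound r \<ge> 0"
  unfolding sandwich_bound_def by simp

lemma prod_ordered_pairs_half_dist_le:
  fixes u :: "'a::linorder \<Rightarrow> real"
  assumes fin: "finite I" and rng: "\<And>i. i \<in> I \<Longrightarrow> 0 \<le> u i \<and> u i \<le> 1"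
  shows "(\<Prod>(i, j)\<in>ordered_pairs I. \<bar>u i - u j\<bar> / 2) \<le> sandwich_bound (card I)"
proof -
  let ?r = "card I"
  define k where "k = ?r * (?r - 1) div 2"
  have "even (?r * (?r - 1))" by (cases ?r) auto
  then have k: "?r * (?r - 1) = 2 * k" unfolding k_def by simp
  have "(\<Prod>(i, j)\<in>ordered_pairs I. \<bar>u i - u j\<bar> / 2)\<^sup>2 = (\<Prod>i\<in>I. \<Prod>j\<in>I-{i}. \<bar>u i - u j\<bar> / 2)"
    using fin by (intro prod_ordered_pairs_sq) (simp_all add: abs_minus_commute)
  also have "\<dots> = (\<Prod>i\<in>I. (1/2) ^ (?r - 1) * node_dist_prod u I i)"
    unfolding node_dist_prod_def using fin
    by (intro prod.cong refl) (simp add: prod_dividef power_one_over card_Diff_singleton)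
  also have "\<dots> = (1/2) ^ (?r * (?r - 1)) * node_discriminant u I"
    unfolding node_discriminant_def by (simp add: prod.distrib power_mult[symmetric] mult.commute)
  also have "\<dots> \<le> (1/2) ^ (?r * (?r - 1)) * ((fact ?r)\<^sup>2 / 4 ^ ((?r - 1)\<^sup>2))"
    by (intro mult_left_mono node_discriminant_le fin rng) auto
  also have "\<dots> = (sandwich_bound ?r)\<^sup>2"
  proof -
    have four: "(4::real) ^ m = (2 ^ m)\<^sup>2" for m
      by (simp add: power2_eq_square power_mult_distrib[symmetric])
    have "(1/2::real) ^ (?r * (?r - 1)) = 1 / (2 ^ k)\<^sup>2"
      unfolding k by (simp add: power_mult power_one_over four)
    then show ?thesis
      unfolding sandwich_bound_def k_def[symmetric] four by (simp add: power_divide power_mult_distrib)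
  qed
  finally show ?thesis
    using sandwich_bound_nonneg by (rule power2_le_imp_le)
qed

lemma pair_supports_nontrivial_local_eq:
  fixes f :: "nat \<Rightarrow> nat \<Rightarrow> real"
  assumes ij: "i \<noteq> j" and sym: "f j i = f i j" and above: "f i j > f i i" "f i j > f j j"
  shows "supports_nontrivial_local_eq f {i, j}"
proof -
  define D where "D = 2 * f i j - f i i - f j j"
  have D: "D > 0" unfolding D_def using above by simp
  define p where "p k = (if k = i then f i j - f j j else f i j - f i i) / D" for k
  have "\<forall>k\<in>{i, j}. p k > 0"
    unfolding p_def using ij above D by auto
  moreover have "(\<Sum>k\<in>{i, j}. p k) = 1"
  proof -
    have "(\<Sum>k\<in>{i, j}. p k) = ((f i j - f j j) + (f i j - f i i)) / D"
      unfolding p_def using ij by (simp add: add_divide_distrib[symmetric])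
    also have "(f i j - f j j) + (f i j - f i i) = D" unfolding D_def by simp
    finally show ?thesis using D by simp
  qed
  moreover have "\<forall>k\<in>{i, j}. (\<Sum>l\<in>{i, j}. f k l * p l) = f i i * p i + f i j * p j"
    unfolding p_def using ij D sym by (auto simp: D_def field_simps)
  moreover have "(\<Sum>k\<in>{i, j}. \<Sum>l\<in>{i, j}. f k l * x k * x l) \<le> 0"
    if "(\<Sum>k\<in>{i, j}. x k) = 0" for x :: "nat \<Rightarrow> real"
  proof -
    have "x j = - x i" using that ij by simp
    then have "(\<Sum>k\<in>{i, j}. \<Sum>l\<in>{i, j}. f k l * x k * x l) = - D * (x i)\<^sup>2"
      using ij sym by (simp add: D_def power2_eq_square algebra_simps)
    also have "\<dots> \<le> 0" using D by simp
    finally show ?thesis .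
  qed
  moreover have "card {i, j} \<ge> 2" using ij by simp
  ultimately show ?thesis
    unfolding supports_nontrivial_local_eq_def by blast
qed

text \<open>Positive weights are exhausted by the compact sets \<open>bounded_simplex J m\<close>; this makes
  the set of matrices admitting equalizing positive weights an \<open>F\<^sub>\<sigma>\<close> set.\<close>
definition bounded_simplex :: "nat set \<Rightarrow> nat \<Rightarrow> (nat \<Rightarrow> real) set" where
  "bounded_simplex J m =
     (\<Pi>\<^sub>E j\<in>UNIV. if j \<in> J then {1 / (real m + 1)..1} else {0}) \<inter> {p. (\<Sum>j\<in>J. p j) = 1}"

definition equalizable :: "nat set \<Rightarrow> nat \<Rightarrow> (nat \<Rightarrow> nat \<Rightarrow> real) set" where
  "equalizable J m = {f. \<exists>p\<in>bounded_simplex J m.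
     \<forall>i\<in>J. \<forall>i'\<in>J. (\<Sum>j\<in>J. f i j * p j) = (\<Sum>j\<in>J. f i' j * p j)}"

definition nsd_on_sum_zero :: "nat set \<Rightarrow> (nat \<Rightarrow> nat \<Rightarrow> real) set" where
  "nsd_on_sum_zero J =
     {f. \<forall>x :: nat \<Rightarrow> real. (\<Sum>i\<in>J. x i) = 0 \<longrightarrow> (\<Sum>i\<in>J. \<Sum>j\<in>J. f i j * x i * x j) \<le> 0}"

lemma compact_bounded_simplex: "compact (bounded_simplex J m)"
proof -
  have "compactin (product_topology (\<lambda>_. euclidean) UNIV)
          (\<Pi>\<^sub>E j\<in>UNIV. if j \<in> J then {1 / (real m + 1)..1::real} else {0})"
    by (subst compactin_PiE) (auto simp: compactin_euclidean_iff)
  then have "compact (\<Pi>\<^sub>E j\<in>UNIV. if j \<in> J then {1 / (real m + 1)..1::real} else {0})"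
    by (simp add: euclidean_product_topology compactin_euclidean_iff)
  moreover have "closed {p::nat \<Rightarrow> real. (\<Sum>j\<in>J. p j) = 1}"
    by (intro closed_Collect_eq continuous_on_sum continuous_on_product_coordinates continuous_on_const)
  ultimately show ?thesis unfolding bounded_simplex_def by (rule compact_Int_closed)
qed

lemma continuous_on_snd_entry:
  "continuous_on UNIV (\<lambda>z :: 'a::topological_space \<times> ('b \<Rightarrow> 'c \<Rightarrow> real). snd z i j)"
  by (rule continuous_on_product_then_coordinatewise[OF
      continuous_on_product_then_coordinatewise[OF continuous_on_snd[OF continuous_on_id]]])

lemma continuous_on_fst_entry:
  "continuous_on UNIV (\<lambda>z :: ('b \<Rightarrow> real) \<times> 'a::topological_space. fst z j)"
  by (rule continuous_on_product_then_coordinatewise[OF continuous_on_fst[OF continuous_on_id]])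

text \<open>A projection along a compact factor is a closed map.\<close>
lemma closed_equalizable: "closed (equalizable J m)"
proof -
  define T where "T = (\<Inter>i\<in>J. \<Inter>i'\<in>J. {z :: (nat \<Rightarrow> real) \<times> (nat \<Rightarrow> nat \<Rightarrow> real).
    (\<Sum>j\<in>J. snd z i j * fst z j) = (\<Sum>j\<in>J. snd z i' j * fst z j)})"
  have "closed T"
    unfolding T_def
    by (intro closed_INT ballI closed_Collect_eq continuous_on_sum continuous_on_mult
        continuous_on_snd_entry continuous_on_fst_entry)
  have "compact_space (subtopology euclidean (bounded_simplex J m))"
    by (simp add: compact_space_subtopology compactin_euclidean_iff compact_bounded_simplex)
  then have "closed_map (prod_topology (subtopology euclidean (bounded_simplex J m))
      (euclidean :: (nat \<Rightarrow> nat \<Rightarrow> real) topology)) euclidean snd"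
    by (rule closed_map_snd)
  moreover have "prod_topology (subtopology euclidean (bounded_simplex J m))
      (euclidean :: (nat \<Rightarrow> nat \<Rightarrow> real) topology) = subtopology euclidean (bounded_simplex J m \<times> UNIV)"
    using subtopology_Times[of "euclidean :: (nat \<Rightarrow> real) topology"
        "euclidean :: (nat \<Rightarrow> nat \<Rightarrow> real) topology" "bounded_simplex J m" UNIV]
    by (simp add: prod_topology_euclidean)
  moreover have "closedin (subtopology euclidean (bounded_simplex J m \<times> UNIV)) (T \<inter> (bounded_simplex J m \<times> UNIV))"
    using closedin_closed_Int[OF \<open>closed T\<close>, of "bounded_simplex J m \<times> UNIV"]
    by (simp add: Int_commute)
  ultimately have "closedin euclidean (snd ` (T \<inter> (bounded_simplex J m \<times> UNIV)))"
    unfolding closed_map_def by metis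
  moreover have "snd ` (T \<inter> (bounded_simplex J m \<times> UNIV)) = equalizable J m"
  proof (intro equalityI subsetI)
    fix f assume "f \<in> snd ` (T \<inter> (bounded_simplex J m \<times> UNIV))"
    then obtain p where "(p, f) \<in> T" "p \<in> bounded_simplex J m" by force
    then show "f \<in> equalizable J m" unfolding T_def equalizable_def by auto
  next
    fix f assume "f \<in> equalizable J m"
    then obtain p where "(p, f) \<in> T" "p \<in> bounded_simplex J m"
      unfolding T_def equalizable_def by auto
    then show "f \<in> snd ` (T \<inter> (bounded_simplex J m \<times> UNIV))" by force
  qed
  ultimately show ?thesis by simp
qed

lemma closed_nsd_on_sum_zero: "closed (nsd_on_sum_zero J)"
proof -
  have cont: "continuous_on UNIV (\<lambda>f :: nat \<Rightarrow> nat \<Rightarrow> real. f i j)" for i j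
    by (rule continuous_on_product_then_coordinatewise[OF continuous_on_product_coordinates])
  have eq: "nsd_on_sum_zero J = (\<Inter>x\<in>{x. (\<Sum>i\<in>J. x i) = 0}.
      {f. (\<Sum>i\<in>J. \<Sum>j\<in>J. f i j * x i * x j) \<le> 0})"
    unfolding nsd_on_sum_zero_def by auto
  show ?thesis
    unfolding eq by (intro closed_INT ballI closed_Collect_le continuous_on_sum
        continuous_on_mult continuous_on_const cont)
qed

lemma equalizable_if_positive_weights:
  assumes fin: "finite J" and ne: "J \<noteq> {}"
    and pos: "\<forall>j\<in>J. p j > 0" and one: "(\<Sum>j\<in>J. p j) = 1"
    and v: "\<forall>i\<in>J. (\<Sum>j\<in>J. f i j * p j) = v"
  shows "\<exists>m. f \<in> equalizable J m"
proof -
  have "Min (p ` J) > 0" using fin ne pos by (subst Min_gr_iff) auto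
  define m where "m = nat \<lceil>1 / Min (p ` J)\<rceil>"
  have "1 / Min (p ` J) \<le> real m" unfolding m_def by linarith
  then have "1 / (real m + 1) \<le> Min (p ` J)"
    using \<open>Min (p ` J) > 0\<close> by (simp add: field_simps)
  then have lower: "1 / (real m + 1) \<le> p j" if "j \<in> J" for j
    using fin that by (meson Min_le finite_imageI image_eqI order.trans)
  have upper: "p j \<le> 1" if "j \<in> J" for j
    using member_le_sum[of j J p] pos that fin one by (simp add: less_imp_le)
  define p' where "p' j = (if j \<in> J then p j else 0)" for j
  have "p' \<in> bounded_simplex J m"
    unfolding bounded_simplex_def using lower upper one by (auto simp: p'_def PiE_iff)
  moreover have "(\<Sum>j\<in>J. f i j * p' j) = v" if "i \<in> J" for i
    using v that by (simp add: p'_def)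
  ultimately show ?thesis unfolding equalizable_def by auto
qed

lemma positive_weights_if_equalizable:
  assumes ne: "J \<noteq> {}" and "f \<in> equalizable J m"
  shows "\<exists>p. (\<forall>j\<in>J. p j > 0) \<and> (\<Sum>j\<in>J. p j) = 1 \<and> (\<exists>v. \<forall>i\<in>J. (\<Sum>j\<in>J. f i j * p j) = v)"
proof -
  obtain p where p: "p \<in> bounded_simplex J m"
    and eq: "\<forall>i\<in>J. \<forall>i'\<in>J. (\<Sum>j\<in>J. f i j * p j) = (\<Sum>j\<in>J. f i' j * p j)"
    using assms(2) unfolding equalizable_def by blast
  obtain i0 where "i0 \<in> J" using ne by blast
  have "p j \<ge> 1 / (real m + 1)" if "j \<in> J" for j
  proof -
    have "p \<in> (\<Pi>\<^sub>E j\<in>UNIV. if j \<in> J then {1 / (real m + 1)..1} else {0})"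
      using p unfolding bounded_simplex_def by (rule IntD1)
    then have "p j \<in> (if j \<in> J then {1 / (real m + 1)..1} else {0})" by (rule PiE_mem) simp
    then show ?thesis using that by simp
  qed
  then have "\<forall>j\<in>J. p j > 0"
    by (meson divide_pos_pos less_le_trans of_nat_0_le_iff add_nonneg_pos zero_less_one)
  moreover have "(\<Sum>j\<in>J. p j) = 1" using p unfolding bounded_simplex_def by blast
  moreover have "\<forall>i\<in>J. (\<Sum>j\<in>J. f i j * p j) = (\<Sum>j\<in>J. f i0 j * p j)"
    using eq \<open>i0 \<in> J\<close> by blast
  ultimately show ?thesis by blast
qed

lemma supports_nontrivial_local_eq_iff:
  assumes fin: "finite J" and two: "card J \<ge> 2"
  shows "supports_nontrivial_local_eq f J \<longleftrightarrow> f \<in> (\<Union>m. equalizable J m) \<inter> nsd_on_sum_zero J"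
proof -
  have ne: "J \<noteq> {}" using two by auto
  show ?thesis
  proof
    assume "supports_nontrivial_local_eq f J"
    then obtain p v where pos: "\<forall>j\<in>J. p j > 0" and one: "(\<Sum>j\<in>J. p j) = 1"
      and v: "\<forall>i\<in>J. (\<Sum>j\<in>J. f i j * p j) = v"
      and nsd: "\<forall>x. (\<Sum>i\<in>J. x i) = 0 \<longrightarrow> (\<Sum>i\<in>J. \<Sum>j\<in>J. f i j * x i * x j) \<le> 0"
      unfolding supports_nontrivial_local_eq_def by blast
    have "\<exists>m. f \<in> equalizable J m" by (rule equalizable_if_positive_weights[OF fin ne pos one v])
    moreover have "f \<in> nsd_on_sum_zero J" using nsd unfolding nsd_on_sum_zero_def by simp
    ultimately show "f \<in> (\<Union>m. equalizable J m) \<inter> nsd_on_sum_zero J" by blast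
  next
    assume "f \<in> (\<Union>m. equalizable J m) \<inter> nsd_on_sum_zero J"
    then obtain m where m: "f \<in> equalizable J m" and nsd: "f \<in> nsd_on_sum_zero J" by blast
    have "\<exists>p. (\<forall>j\<in>J. p j > 0) \<and> (\<Sum>j\<in>J. p j) = 1 \<and> (\<exists>v. \<forall>i\<in>J. (\<Sum>j\<in>J. f i j * p j) = v)"
      by (rule positive_weights_if_equalizable[OF ne m])
    moreover have "\<forall>x. (\<Sum>i\<in>J. x i) = 0 \<longrightarrow> (\<Sum>i\<in>J. \<Sum>j\<in>J. f i j * x i * x j) \<le> 0"
      using nsd unfolding nsd_on_sum_zero_def by simp
    ultimately show "supports_nontrivial_local_eq f J"
      unfolding supports_nontrivial_local_eq_def using two by blast
  qed
qed

lemma sets_supports_nontrivial_local_eq: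
  assumes "finite J"
  shows "{f. supports_nontrivial_local_eq f J} \<in> sets borel"
proof (cases "card J \<ge> 2")
  case True
  then have "{f. supports_nontrivial_local_eq f J} = (\<Union>m. equalizable J m) \<inter> nsd_on_sum_zero J"
    using supports_nontrivial_local_eq_iff[OF assms] by blast
  also have "\<dots> \<in> sets borel"
    using closed_equalizable closed_nsd_on_sum_zero
    by (intro sets.Int sets.countable_UN borel_closed) auto
  finally show ?thesis .
qed (simp add: supports_nontrivial_local_eq_def)

lemma measurable_sample_component: "(\<lambda>\<omega>. \<omega> k) \<in> borel_measurable (sample_space g n)"
proof (cases "k \<in> pair_index n")
  case True
  have "(\<lambda>x. x k) \<in> sample_space g n \<rightarrow>\<^sub>M dens_measure g"
    unfolding sample_space_def by (rule measurable_component_singleton[OF True])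
  moreover have "(sample_space g n \<rightarrow>\<^sub>M dens_measure g) = (sample_space g n \<rightarrow>\<^sub>M borel)"
    by (rule measurable_cong_sets) (simp_all add: dens_measure_def)
  ultimately show ?thesis by simp
next
  case False
  have "(\<lambda>\<omega>. undefined :: real) \<in> borel_measurable (sample_space g n)" by simp
  moreover have "\<omega> k = undefined" if "\<omega> \<in> space (sample_space g n)" for \<omega>
    using that False unfolding sample_space_def by (cases k) (auto simp: space_PiM PiE_def extensional_def)
  ultimately show ?thesis using measurable_cong[of "sample_space g n" "\<lambda>\<omega>. \<omega> k" "\<lambda>\<omega>. undefined"] by simp
qed

lemma measurable_payoff_entry [measurable]:
  "(\<lambda>\<omega>. payoff \<omega> i j) \<in> borel_measurable (sample_space g n)"
  unfolding payoff_def by (rule measurable_sample_component)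

lemma measurable_payoff: "payoff \<in> sample_space g n \<rightarrow>\<^sub>M (borel :: (nat \<Rightarrow> nat \<Rightarrow> real) measure)"
proof -
  have rows: "(\<lambda>\<omega>. payoff \<omega> i) \<in> sample_space g n \<rightarrow>\<^sub>M (borel :: (nat \<Rightarrow> real) measure)" for i
  proof -
    have "(\<lambda>\<omega> j. payoff \<omega> i j) \<in> sample_space g n \<rightarrow>\<^sub>M PiM UNIV (\<lambda>_. (borel :: real measure))"
      by (rule measurable_PiM_single') simp_all
    moreover have "sample_space g n \<rightarrow>\<^sub>M (borel :: (nat \<Rightarrow> real) measure)
        = sample_space g n \<rightarrow>\<^sub>M PiM UNIV (\<lambda>_. (borel :: real measure))"
      by (rule measurable_cong_sets[OF refl sets_PiM_equal_borel[symmetric]])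
    ultimately show ?thesis by simp
  qed
  have "(\<lambda>\<omega> i. payoff \<omega> i) \<in> sample_space g n \<rightarrow>\<^sub>M PiM UNIV (\<lambda>_. (borel :: (nat \<Rightarrow> real) measure))"
    by (rule measurable_PiM_single') (simp_all add: rows)
  moreover have "sample_space g n \<rightarrow>\<^sub>M (borel :: (nat \<Rightarrow> nat \<Rightarrow> real) measure)
      = sample_space g n \<rightarrow>\<^sub>M PiM UNIV (\<lambda>_. (borel :: (nat \<Rightarrow> real) measure))"
    by (rule measurable_cong_sets[OF refl sets_PiM_equal_borel[symmetric]])
  ultimately show ?thesis by simp
qed

lemma pred_supports_nontrivial_local_eq:
  "finite J \<Longrightarrow> Measurable.pred (sample_space g n) (\<lambda>\<omega>. supports_nontrivial_local_eq (payoff \<omega>) J)"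
  using pred_sets2[OF sets_supports_nontrivial_local_eq measurable_payoff] by simp

lemma pred_K_set:
  assumes "finite I"
  shows "Measurable.pred (sample_space g n) (\<lambda>\<omega>. K_set (payoff \<omega>) I)"
proof -
  have "Measurable.pred (sample_space g n) (\<lambda>\<omega>. (payoff \<omega> i i + payoff \<omega> j j) / 2 \<le> payoff \<omega> i j)"
    for i j
    unfolding pred_def by (intro borel_measurable_le borel_measurable_divide borel_measurable_add
        measurable_payoff_entry borel_measurable_const)
  then show ?thesis
    unfolding K_set_def using assms by (intro pred_intros_finite(3) pred_intros_imp')
qed

lemma pred_no_proper_support:
  assumes fin: "finite I"
  shows "Measurable.pred (sample_space g n) (\<lambda>\<omega>. \<forall>J\<in>Pow I. J \<noteq> I \<longrightarrow>
    \<not> (2 \<le> card J \<and> supports_nontrivial_local_eq (payoff \<omega>) J))"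
proof (rule pred_intros_finite(3))
  show "finite (Pow I)" using fin by simp
next
  fix J assume "J \<in> Pow I"
  then have "finite J" using fin finite_subset by blast
  then show "Measurable.pred (sample_space g n) (\<lambda>\<omega>. J \<noteq> I \<longrightarrow>
      \<not> (2 \<le> card J \<and> supports_nontrivial_local_eq (payoff \<omega>) J))"
    by (intro pred_intros_imp' pred_intros_logic(2) pred_intros_conj1' pred_supports_nontrivial_local_eq)
qed

lemma sets_bad_event:
  "{\<omega> \<in> space (sample_space g n). bad_event \<epsilon> n \<omega>} \<in> sets (sample_space g n)"
proof -
  let ?no_support = "\<lambda>\<omega> I. \<forall>J\<in>Pow I. J \<noteq> I \<longrightarrow>
    \<not> (2 \<le> card J \<and> supports_nontrivial_local_eq (payoff \<omega>) J)"
  have eq: "bad_event \<epsilon> n \<omega> \<longleftrightarrow>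
      (\<exists>I\<in>Pow {..<n}. K_set (payoff \<omega>) I \<and> r_star \<epsilon> n \<le> card I \<and> ?no_support \<omega> I)" for \<omega>
    unfolding bad_event_def Bex_def Ball_def Pow_iff psubset_eq by (intro ex_cong1) auto
  have "Measurable.pred (sample_space g n)
      (\<lambda>\<omega>. \<exists>I\<in>Pow {..<n}. K_set (payoff \<omega>) I \<and> r_star \<epsilon> n \<le> card I \<and> ?no_support \<omega> I)"
  proof (rule pred_intros_finite(4))
    fix I assume "I \<in> Pow {..<n}"
    then have "finite I" using finite_subset by auto
    then show "Measurable.pred (sample_space g n)
        (\<lambda>\<omega>. K_set (payoff \<omega>) I \<and> r_star \<epsilon> n \<le> card I \<and> ?no_support \<omega> I)"
      by (intro pred_intros_logic(3) pred_intros_conj1' pred_K_set pred_no_proper_support)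
  qed simp
  then show ?thesis unfolding eq[abs_def] pred_def .
qed

definition sandwiched :: "(nat \<Rightarrow> nat \<Rightarrow> real) \<Rightarrow> nat set \<Rightarrow> bool" where
  "sandwiched f I \<longleftrightarrow>
     (\<forall>i\<in>I. \<forall>j\<in>I. i < j \<longrightarrow> (f i i + f j j) / 2 \<le> f i j \<and> f i j \<le> max (f i i) (f j j))"

lemma pred_sandwiched:
  assumes "finite I"
  shows "Measurable.pred (sample_space g n) (\<lambda>\<omega>. sandwiched (payoff \<omega>) I)"
proof -
  have "Measurable.pred (sample_space g n) (\<lambda>\<omega>. (payoff \<omega> i i + payoff \<omega> j j) / 2 \<le> payoff \<omega> i j)"
    for i j
    unfolding pred_def by (intro borel_measurable_le borel_measurable_divide borel_measurable_add
        measurable_payoff_entry borel_measurable_const)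
  moreover have "Measurable.pred (sample_space g n)
      (\<lambda>\<omega>. payoff \<omega> i j \<le> max (payoff \<omega> i i) (payoff \<omega> j j))" for i j
    unfolding pred_def by (intro borel_measurable_le borel_measurable_max measurable_payoff_entry)
  ultimately show ?thesis
    unfolding sandwiched_def using assms
    by (intro pred_intros_finite(3) pred_intros_imp' pred_intros_logic(3))
qed

definition sandwich_box :: "(nat \<times> nat \<Rightarrow> real) \<Rightarrow> nat set \<Rightarrow> nat \<times> nat \<Rightarrow> real set" where
  "sandwich_box x I k = (if k \<in> ordered_pairs I
     then {(x (fst k, fst k) + x (snd k, snd k)) / 2..max (x (fst k, fst k)) (x (snd k, snd k))}
     else UNIV)"

lemma sandwiched_merge_imp_PiE:
  assumes D: "D = (\<lambda>i. (i, i)) ` I" and pairs: "ordered_pairs I \<subseteq> R"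
    and y: "y \<in> extensional R" and sw: "sandwiched (payoff (merge D R (x, y))) I"
  shows "y \<in> PiE R (sandwich_box x I)"
proof (rule PiE_I)
  fix k assume "k \<in> R"
  show "y k \<in> sandwich_box x I k"
  proof (cases "k \<in> ordered_pairs I")
    case True
    then obtain i j where k: "k = (i, j)" and ij: "i \<in> I" "j \<in> I" "i < j"
      unfolding ordered_pairs_def by auto
    have "merge D R (x, y) (i, i) = x (i, i)" "merge D R (x, y) (j, j) = x (j, j)"
      "merge D R (x, y) (i, j) = y (i, j)"
      using ij True pairs k unfolding D by (auto simp: merge_def)
    moreover have "(payoff (merge D R (x, y)) i i + payoff (merge D R (x, y)) j j) / 2
        \<le> payoff (merge D R (x, y)) i j \<and>
        payoff (merge D R (x, y)) i j \<le> max (payoff (merge D R (x, y)) i i) (payoff (merge D R (x, y)) j j)"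
      using sw ij unfolding sandwiched_def by blast
    ultimately show ?thesis
      using ij True unfolding sandwich_box_def payoff_def k by simp
  qed (simp add: sandwich_box_def)
qed (rule extensional_arb[OF y])

lemma finite_pair_index: "finite (pair_index n)"
  unfolding pair_index_def by (rule finite_subset[of _ "{..<n} \<times> {..<n}"]) auto

text \<open>An entry exceeding both of its diagonal entries would make the pair support an equilibrium.\<close>
lemma bad_event_imp_sandwiched:
  assumes r: "3 \<le> r_star \<epsilon> n" and bad: "bad_event \<epsilon> n \<omega>"
  obtains I where "I \<subseteq> {..<n}" "card I = r_star \<epsilon> n" "sandwiched (payoff \<omega>) I"
proof -
  from bad obtain I where I: "I \<subseteq> {..<n}" and K: "K_set (payoff \<omega>) I" and card: "r_star \<epsilon> n \<le> card I"
    and no_eq: "\<And>J. J \<subset> I \<Longrightarrow> card J \<ge> 2 \<Longrightarrow> \<not> supports_nontrivial_local_eq (payoff \<omega>) J"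
    unfolding bad_event_def by blast
  obtain I' where I': "I' \<subseteq> I" "card I' = r_star \<epsilon> n"
    using obtain_subset_with_card_n[OF card] by metis
  have "sandwiched (payoff \<omega>) I'"
    unfolding sandwiched_def
  proof (intro ballI impI conjI)
    fix i j assume ij: "i \<in> I'" "j \<in> I'" "i < j"
    then have "i \<in> I" "j \<in> I" "i \<noteq> j" using I' by auto
    then show "(payoff \<omega> i i + payoff \<omega> j j) / 2 \<le> payoff \<omega> i j"
      using K unfolding K_set_def by blast
    show "payoff \<omega> i j \<le> max (payoff \<omega> i i) (payoff \<omega> j j)"
    proof (rule ccontr)
      assume "\<not> ?thesis"
      then have "supports_nontrivial_local_eq (payoff \<omega>) {i, j}"
        using \<open>i \<noteq> j\<close> by (intro pair_supports_nontrivial_local_eq) (simp_all add: payoff_def)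
      moreover have "card {i, j} = 2" using \<open>i \<noteq> j\<close> by simp
      moreover have "{i, j} \<noteq> I"
        using \<open>card {i, j} = 2\<close> r card by auto
      then have "{i, j} \<subset> I" using \<open>i \<in> I\<close> \<open>j \<in> I\<close> by auto
      ultimately show False using no_eq by simp
    qed
  qed
  with I I' that show ?thesis by blast
qed

lemma quadratic_exponent_le:
  fixes r L q d :: real
  assumes d: "d > 0" "q = 3/2 - d" "q > 0" and L: "0 \<le> L" "L \<le> q * r"
    and r: "r \<ge> 5 / d" "r \<ge> 3"
  shows "r * L + (d / (9/2)) * L\<^sup>2 \<le> (r - 1)\<^sup>2 + r * (r - 1) / 2"
proof -
  have "r * L \<le> q * r\<^sup>2" using mult_left_mono[OF L(2), of r] r by (simp add: power2_eq_square algebra_simps)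
  moreover have "L\<^sup>2 \<le> (9/4) * r\<^sup>2"
  proof -
    have "L\<^sup>2 \<le> (q * r)\<^sup>2" using L by (intro power_mono) auto
    also have "\<dots> \<le> (3/2 * r)\<^sup>2" using d r by (intro power_mono mult_right_mono) auto
    finally show ?thesis by (simp add: power2_eq_square)
  qed
  then have "(d / (9/2)) * L\<^sup>2 \<le> (d / (9/2)) * ((9/4) * r\<^sup>2)"
    using d by (intro mult_left_mono) auto
  moreover have "5 * r \<le> d * r\<^sup>2"
    using mult_right_mono[of 5 "d * r" r] r d by (simp add: field_simps power2_eq_square)
  ultimately have "r * L + (d / (9/2)) * L\<^sup>2 \<le> q * r\<^sup>2 + (d / (9/2)) * ((9/4) * r\<^sup>2)"
    by linarith
  also have "\<dots> = 3/2 * r\<^sup>2 - d / 2 * r\<^sup>2" unfolding d(2) by (simp add: algebra_simps)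
  also have "\<dots> \<le> 3/2 * r\<^sup>2 - 5/2 * r + 1" using \<open>5 * r \<le> d * r\<^sup>2\<close> by simp
  also have "\<dots> = (r - 1)\<^sup>2 + r * (r - 1) / 2" by (simp add: power2_eq_square field_simps)
  finally show ?thesis .
qed

lemma binomial_sandwich_bound_le:
  assumes n: "n > 0" and r: "r \<ge> 1"
  shows "real (n choose r) * sandwich_bound r
    \<le> exp ((real r * log 2 (real n) - (real r - 1)\<^sup>2 - real r * (real r - 1) / 2) * ln 2)"
proof -
  define A where "A = (r - 1)\<^sup>2 + r * (r - 1) div 2"
  have "even (r * (r - 1))" by (cases r) auto
  then have A: "real A = (real r - 1)\<^sup>2 + real r * (real r - 1) / 2"
    unfolding A_def using r by (simp add: real_of_nat_div of_nat_diff)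
  have "real (n choose r) * fact r \<le> real n ^ r"
    using binomial_fact_pow[of n r] by (metis of_nat_fact of_nat_le_iff of_nat_mult of_nat_power)
  then have "real (n choose r) * sandwich_bound r \<le> real n ^ r / 2 ^ A"
    unfolding sandwich_bound_def A_def by (simp add: power_add divide_right_mono)
  also have "\<dots> = exp ((real r * log 2 (real n) - real A) * ln 2)"
  proof -
    have "real n ^ r = exp (real r * (log 2 (real n) * ln 2))"
      using n by (simp add: exp_of_nat_mult log_def)
    moreover have "(2::real) ^ A = exp (real A * ln 2)" by (simp add: exp_of_nat_mult)
    ultimately show ?thesis by (simp add: exp_diff algebra_simps)
  qed
  finally show ?thesis by (simp add: A algebra_simps)
qed

lemma eventually_binomial_sandwich_bound_le:
  assumes eps: "\<epsilon> > 0"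
  shows "\<exists>c>0. \<forall>\<^sub>F n in sequentially. 3 \<le> r_star \<epsilon> n \<and>
    real (n choose r_star \<epsilon> n) * sandwich_bound (r_star \<epsilon> n) \<le> exp (- c * \<epsilon> * (ln (real n))\<^sup>2)"
proof -
  define q where "q = 1 / (2/3 + \<epsilon>)"
  define d where "d = 3/2 - q"
  \<comment> \<open>Since \<open>log n \<le> q r\<close> with \<open>q < 3/2\<close>, the exponent \<open>r log n - 3 r\<^sup>2 / 2 + O(r)\<close>
    retains a negative multiple of \<open>d (log n)\<^sup>2\<close>.\<close>
  have q: "q > 0" and d: "d > 0" unfolding d_def q_def using eps by (auto simp: field_simps)
  define c where "c = d / (9/2 * \<epsilon> * ln 2)"
  have c: "c > 0" "c * \<epsilon> * ln 2 = d / (9/2)" unfolding c_def using d eps by (auto simp: field_simps)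
  define K where "K = 3/2 * max 3 (5 / d)"
  obtain N :: nat where N: "2 powr K \<le> real N" using real_arch_simple by blast
  have "3 \<le> r_star \<epsilon> n \<and> real (n choose r_star \<epsilon> n) * sandwich_bound (r_star \<epsilon> n)
      \<le> exp (- c * \<epsilon> * (ln (real n))\<^sup>2)" if "Suc N \<le> n" for n
  proof -
    define L where "L = log 2 (real n)"
    define r where "r = r_star \<epsilon> n"
    have n: "n > 0" "2 powr K \<le> real n" using N that by auto
    then have "K \<le> L" unfolding L_def by (simp add: le_log_iff)
    then have L: "L \<ge> 0" "3/2 * max 3 (5 / d) \<le> L" unfolding K_def by auto
    have rL: "(2/3 + \<epsilon>) * L \<le> real r"
      unfolding r_def r_star_def L_def[symmetric] using L eps by linarith
    then have "2/3 * L + \<epsilon> * L \<le> real r" by (simp add: distrib_right)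
    moreover have "0 \<le> \<epsilon> * L" using eps L by simp
    ultimately have r: "L \<le> q * real r" "2/3 * L \<le> real r"
      using rL eps by (auto simp: q_def field_simps)
    then have r3: "3 \<le> real r" "5 / d \<le> real r" using L by auto
    have "real (n choose r) * sandwich_bound r
        \<le> exp ((real r * L - (real r - 1)\<^sup>2 - real r * (real r - 1) / 2) * ln 2)"
      unfolding L_def using n r3 by (intro binomial_sandwich_bound_le) auto
    also have "\<dots> \<le> exp (- (d / (9/2)) * L\<^sup>2 * ln 2)"
    proof -
      have "q = 3/2 - d" by (simp add: d_def)
      from quadratic_exponent_le[OF d this q L(1) r(1) r3(2) r3(1)]
      have "real r * L - (real r - 1)\<^sup>2 - real r * (real r - 1) / 2 \<le> - (d / (9/2)) * L\<^sup>2"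
        by linarith
      then show ?thesis by (intro exp_mono mult_right_mono) auto
    qed
    also have "\<dots> = exp (- c * \<epsilon> * (ln (real n))\<^sup>2)"
      unfolding c(2)[symmetric] L_def log_def by (simp add: power2_eq_square)
    finally show ?thesis using r3 unfolding r_def by simp
  qed
  then show ?thesis using c(1) unfolding eventually_sequentially by blast
qed

lemma (in product_prob_space) emeasure_PiM_le_by_sections:
  assumes DR: "D \<inter> R = {}" and fin: "finite D" "finite R"
    and P: "Measurable.pred (PiM (D \<union> R) M) P"
    and sections: "AE x in PiM D M. emeasure (PiM R M) {y \<in> space (PiM R M). P (merge D R (x, y))} \<le> B"
  shows "emeasure (PiM (D \<union> R) M) {\<omega> \<in> space (PiM (D \<union> R) M). P \<omega>} \<le> B"
proof -
  interpret D: product_prob_space M D by unfold_locales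
  interpret R: product_prob_space M R by unfold_locales
  let ?E = "{\<omega> \<in> space (PiM (D \<union> R) M). P \<omega>}"
  let ?X = "merge D R -` ?E \<inter> space (PiM D M \<Otimes>\<^sub>M PiM R M)"
  have E: "?E \<in> sets (PiM (D \<union> R) M)" using P by (simp add: pred_def)
  have X: "?X \<in> sets (PiM D M \<Otimes>\<^sub>M PiM R M)" by (rule measurable_sets[OF measurable_merge E])
  have sec: "Pair x -` ?X = {y \<in> space (PiM R M). P (merge D R (x, y))}" if "x \<in> space (PiM D M)" for x
    using that by (auto simp: space_pair_measure intro!: measurable_space[OF measurable_merge])
  have "emeasure (PiM (D \<union> R) M) ?E = emeasure (distr (PiM D M \<Otimes>\<^sub>M PiM R M) (PiM (D \<union> R) M) (merge D R)) ?E"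
    using distr_merge[OF DR fin] by simp
  also have "\<dots> = emeasure (PiM D M \<Otimes>\<^sub>M PiM R M) ?X"
    by (rule emeasure_distr[OF measurable_merge E])
  also have "\<dots> = (\<integral>\<^sup>+x. emeasure (PiM R M) (Pair x -` ?X) \<partial>PiM D M)"
    by (rule R.P.emeasure_pair_measure_alt[OF X])
  also have "\<dots> \<le> (\<integral>\<^sup>+x. B \<partial>PiM D M)"
  proof (rule nn_integral_mono_AE)
    from sections AE_space show "AE x in PiM D M. emeasure (PiM R M) (Pair x -` ?X) \<le> B"
      by eventually_elim (simp only: sec)
  qed
  also have "\<dots> = B"
    by (simp add: D.P.emeasure_space_1)
  finally show ?thesis .
qed

locale decreasing_density =
  fixes g F :: "real \<Rightarrow> real"
  assumes g_nonneg: "\<And>x. x \<in> {0..1} \<Longrightarrow> g x \<ge> 0"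
    and g_antimono: "antimono_on {0..1} g"
    and g_cont: "continuous_on {0..1} g"
    and g_int: "(g has_integral 1) {0..1}"
    and F_def: "\<And>x. x \<in> {0..1} \<Longrightarrow> F x = integral {0..x} g"
begin

lemma g_integrable: "0 \<le> a \<Longrightarrow> b \<le> 1 \<Longrightarrow> g integrable_on {a..b}"
  by (rule integrable_on_subinterval[OF has_integral_integrable[OF g_int]]) auto

lemma integral_g_nonneg: "0 \<le> a \<Longrightarrow> b \<le> 1 \<Longrightarrow> integral {a..b} g \<ge> 0"
  using g_nonneg by (intro integral_nonneg g_integrable) auto

lemma F_diff:
  assumes "0 \<le> a" "a \<le> b" "b \<le> 1"
  shows "F b - F a = integral {a..b} g"
proof -
  have "integral {0..a} g + integral {a..b} g = integral {0..b} g"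
    using assms by (intro Henstock_Kurzweil_Integration.integral_combine g_integrable) auto
  then show ?thesis using assms F_def by auto
qed

lemma F_mono: "0 \<le> a \<Longrightarrow> a \<le> b \<Longrightarrow> b \<le> 1 \<Longrightarrow> F a \<le> F b"
  using F_diff integral_g_nonneg by fastforce

lemma F_range: "x \<in> {0..1} \<Longrightarrow> 0 \<le> F x \<and> F x \<le> 1"
  using F_def[of 0] F_def[of 1] integral_unique[OF g_int] F_mono[of 0 x] F_mono[of x 1] by auto

lemma F_upper_half_le:
  assumes "0 \<le> a" "a \<le> b" "b \<le> 1"
  shows "F b - F ((a + b) / 2) \<le> (F b - F a) / 2"
proof -
  define m where "m = (a + b) / 2"
  have am: "a \<le> m" "m \<le> b" using assms unfolding m_def by auto
  have mid: "b - m = m - a" unfolding m_def by (simp add: field_simps)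
  have "F b - F m = integral {m..b} g" using am assms by (intro F_diff) auto
  also have "\<dots> \<le> integral {m..b} (\<lambda>_. g m)"
    using am assms g_antimono by (intro integral_le g_integrable) (auto simp: monotone_on_def)
  also have "\<dots> = integral {a..m} (\<lambda>_. g m)" using am mid by simp
  also have "\<dots> \<le> integral {a..m} g"
    using am assms g_antimono by (intro integral_le g_integrable) (auto simp: monotone_on_def)
  also have "\<dots> = F m - F a" using am assms by (intro F_diff[symmetric]) auto
  finally show ?thesis unfolding m_def[symmetric] by simp
qed

lemma measurable_density: "(\<lambda>x. ennreal (g x * indicator {0..1} x)) \<in> borel_measurable lborel"
  using borel_measurable_continuous_on_indicator[OF _ g_cont] by (simp add: mult.commute)

lemma emeasure_dens_interval:
  assumes "0 \<le> a" "a \<le> b" "b \<le> 1"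
  shows "emeasure (dens_measure g) {a..b} = ennreal (F b - F a)"
proof -
  have "emeasure (dens_measure g) {a..b}
      = (\<integral>\<^sup>+x. ennreal (g x * indicator {0..1} x) * indicator {a..b} x \<partial>lborel)"
    unfolding dens_measure_def using measurable_density by (subst emeasure_density) auto
  also have "\<dots> = (\<integral>\<^sup>+x. ennreal (indicator {a..b} x * g x) \<partial>lborel)"
    using assms by (intro nn_integral_cong) (auto simp: indicator_def)
  also have "\<dots> = ennreal (integral {a..b} g)"
    using assms g_nonneg by (intro nn_integral_has_integral_lebesgue integrable_integral g_integrable) auto
  finally show ?thesis using F_diff assms by simp
qed

lemma prob_space_dens_measure: "prob_space (dens_measure g)"
proof
  have "emeasure (dens_measure g) UNIV = (\<integral>\<^sup>+x. ennreal (indicator {0..1} x * g x) \<partial>lborel)"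
    unfolding dens_measure_def using measurable_density
    by (subst emeasure_density) (auto intro!: nn_integral_cong simp: indicator_def)
  also have "\<dots> = ennreal 1"
    using g_nonneg by (intro nn_integral_has_integral_lebesgue g_int) auto
  finally show "emeasure (dens_measure g) (space (dens_measure g)) = 1"
    by (simp add: dens_measure_def)
qed

lemma prob_space_sample_space: "prob_space (sample_space g n)"
  unfolding sample_space_def by (intro prob_space_PiM prob_space_dens_measure)

lemma AE_dens_measure_unit_interval: "AE x in dens_measure g. x \<in> {0..1}"
  unfolding dens_measure_def
  by (rule AE_density[OF measurable_density, THEN iffD2]) (auto simp: indicator_def intro!: AE_I2)

lemma emeasure_mid_max_le:
  assumes "a \<in> {0..1}" "b \<in> {0..1}"
  shows "emeasure (dens_measure g) {(a + b) / 2..max a b} \<le> ennreal (\<bar>F a - F b\<bar> / 2)"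
proof -
  have *: "emeasure (dens_measure g) {(a + b) / 2..b} \<le> ennreal (\<bar>F a - F b\<bar> / 2)"
    if "0 \<le> a" "a \<le> b" "b \<le> 1" for a b
    using emeasure_dens_interval[of "(a + b) / 2" b] F_upper_half_le[OF that] F_mono[OF that]
      that by (simp add: ennreal_leI)
  show ?thesis
  proof (cases "a \<le> b")
    case True
    then show ?thesis using *[of a b] assms by simp
  next
    case False
    then show ?thesis using *[of b a] assms by (simp add: add.commute abs_minus_commute)
  qed
qed

lemma product_prob_space_dens: "product_prob_space (\<lambda>_. dens_measure g)"
  using prob_space_dens_measure
  by (simp add: product_prob_space_def product_prob_space_axioms_def product_sigma_finite_def
      prob_space_imp_sigma_finite)

lemma emeasure_sandwiched_section_le:
  assumes I: "I \<subseteq> {..<n}" and x: "\<And>i. i \<in> I \<Longrightarrow> x (i, i) \<in> {0..1}"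
    and D: "D = (\<lambda>i. (i, i)) ` I" and R: "R = pair_index n - D"
  shows "emeasure (PiM R (\<lambda>_. dens_measure g))
      {y \<in> space (PiM R (\<lambda>_. dens_measure g)). sandwiched (payoff (merge D R (x, y))) I}
    \<le> ennreal (sandwich_bound (card I))"
proof -
  interpret product_prob_space "\<lambda>_. dens_measure g" R by (rule product_prob_space_dens)
  have fin: "finite I" "finite R"
    using finite_subset[OF I] finite_subset[OF _ finite_pair_index] R by auto
  have pairs: "ordered_pairs I \<subseteq> R"
    using I unfolding R D ordered_pairs_def pair_index_def by auto
  have "{y \<in> space (PiM R (\<lambda>_. dens_measure g)). sandwiched (payoff (merge D R (x, y))) I}
      \<subseteq> PiE R (sandwich_box x I)"
  proof
    fix y assume "y \<in> {y \<in> space (PiM R (\<lambda>_. dens_measure g)). sandwiched (payoff (merge D R (x, y))) I}"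
    then show "y \<in> PiE R (sandwich_box x I)"
      by (intro sandwiched_merge_imp_PiE[OF D pairs]) (simp_all add: space_PiM PiE_def)
  qed
  then have "emeasure (PiM R (\<lambda>_. dens_measure g))
      {y \<in> space (PiM R (\<lambda>_. dens_measure g)). sandwiched (payoff (merge D R (x, y))) I}
      \<le> (\<Prod>k\<in>R. emeasure (dens_measure g) (sandwich_box x I k))"
    using fin
    by (subst emeasure_PiM[symmetric]) (auto intro!: emeasure_mono simp: sandwich_box_def dens_measure_def)
  also have "\<dots> = (\<Prod>k\<in>ordered_pairs I. emeasure (dens_measure g) (sandwich_box x I k))"
  proof (intro prod.mono_neutral_right fin pairs ballI)
    have "emeasure (dens_measure g) UNIV = 1"
      using prob_space.emeasure_space_1[OF prob_space_dens_measure] by (simp add: dens_measure_def)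
    then show "emeasure (dens_measure g) (sandwich_box x I k) = 1" if "k \<in> R - ordered_pairs I" for k
      using that by (simp add: sandwich_box_def)
  qed
  also have "\<dots> \<le> (\<Prod>(i, j)\<in>ordered_pairs I. ennreal (\<bar>F (x (i, i)) - F (x (j, j))\<bar> / 2))"
    by (intro prod_mono_ennreal) (auto simp: sandwich_box_def ordered_pairs_def intro!: emeasure_mid_max_le x)
  also have "\<dots> = ennreal (\<Prod>(i, j)\<in>ordered_pairs I. \<bar>F (x (i, i)) - F (x (j, j))\<bar> / 2)"
    unfolding case_prod_unfold by (rule prod_ennreal) simp
  also have "\<dots> \<le> ennreal (sandwich_bound (card I))"
    using fin x F_range by (intro ennreal_leI prod_ordered_pairs_half_dist_le) auto
  finally show ?thesis .
qed


lemma emeasure_sandwiched_le: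
  assumes I: "I \<subseteq> {..<n}"
  shows "emeasure (sample_space g n) {\<omega> \<in> space (sample_space g n). sandwiched (payoff \<omega>) I}
    \<le> ennreal (sandwich_bound (card I))"
proof -
  define D where "D = (\<lambda>i. (i, i)) ` I"
  define R where "R = pair_index n - D"
  interpret product_prob_space "\<lambda>_. dens_measure g" D by (rule product_prob_space_dens)
  have fin: "finite I" "finite D" "finite R"
    using finite_subset[OF I] finite_subset[OF _ finite_pair_index] unfolding D_def R_def by auto
  have space: "sample_space g n = PiM (D \<union> R) (\<lambda>_. dens_measure g)"
    using I unfolding sample_space_def D_def R_def pair_index_def by (intro arg_cong2[where f = PiM]) auto
  have "AE x in PiM D (\<lambda>_. dens_measure g). \<forall>i\<in>I. x (i, i) \<in> {0..1}"
    using fin(1) by (intro AE_finite_allI AE_component AE_dens_measure_unit_interval) (auto simp: D_def)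
  then have "AE x in PiM D (\<lambda>_. dens_measure g). emeasure (PiM R (\<lambda>_. dens_measure g))
      {y \<in> space (PiM R (\<lambda>_. dens_measure g)). sandwiched (payoff (merge D R (x, y))) I}
      \<le> ennreal (sandwich_bound (card I))"
    by eventually_elim (rule emeasure_sandwiched_section_le[OF I _ D_def R_def], auto)
  moreover have "Measurable.pred (PiM (D \<union> R) (\<lambda>_. dens_measure g)) (\<lambda>\<omega>. sandwiched (payoff \<omega>) I)"
    using pred_sandwiched[OF fin(1), of g n] by (simp only: space)
  ultimately show ?thesis
    unfolding space using fin by (intro emeasure_PiM_le_by_sections) (auto simp: R_def)
qed


lemma measure_bad_event_le:
  assumes r: "3 \<le> r_star \<epsilon> n"
  shows "measure (sample_space g n) {\<omega> \<in> space (sample_space g n). bad_event \<epsilon> n \<omega>}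
    \<le> real (n choose r_star \<epsilon> n) * sandwich_bound (r_star \<epsilon> n)"
proof -
  let ?M = "sample_space g n" and ?r = "r_star \<epsilon> n"
  define \<I> where "\<I> = {I. I \<subseteq> {..<n} \<and> card I = ?r}"
  define E where "E I = {\<omega> \<in> space ?M. sandwiched (payoff \<omega>) I}" for I
  interpret prob_space ?M by (rule prob_space_sample_space)
  have fin: "finite \<I>" unfolding \<I>_def by (rule finite_subset[of _ "Pow {..<n}"]) auto
  have E: "E I \<in> sets ?M" if "I \<in> \<I>" for I
    using that pred_sandwiched[of I g n] finite_subset[of I "{..<n}"]
    unfolding \<I>_def E_def by (auto simp: pred_def)
  have "{\<omega> \<in> space ?M. bad_event \<epsilon> n \<omega>} \<subseteq> (\<Union>I\<in>\<I>. E I)"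
    using bad_event_imp_sandwiched[OF r] unfolding \<I>_def E_def by blast
  then have "emeasure ?M {\<omega> \<in> space ?M. bad_event \<epsilon> n \<omega>} \<le> emeasure ?M (\<Union>I\<in>\<I>. E I)"
    using fin E by (intro emeasure_mono) auto
  also have "\<dots> \<le> (\<Sum>I\<in>\<I>. emeasure ?M (E I))"
    using fin E by (intro emeasure_subadditive_finite) auto
  also have "\<dots> \<le> (\<Sum>I\<in>\<I>. ennreal (sandwich_bound ?r))"
  proof (rule sum_mono)
    fix I assume "I \<in> \<I>"
    then show "emeasure ?M (E I) \<le> ennreal (sandwich_bound ?r)"
      using emeasure_sandwiched_le[of I n] unfolding \<I>_def E_def by simp
  qed
  also have "\<dots> = ennreal (real (n choose ?r) * sandwich_bound ?r)"
    using n_subsets[of "{..<n}" ?r] sandwich_bound_nonneg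
    by (simp add: \<I>_def ennreal_mult ennreal_of_nat_eq_real_of_nat)
  finally show ?thesis
    using sandwich_bound_nonneg by (simp add: emeasure_eq_measure ennreal_le_iff)
qed

end

theorem theorem2p11:
  fixes F g :: "real \<Rightarrow> real" and \<epsilon> :: real
  assumes g_pos: "\<And>x. x \<in> {0..1} \<Longrightarrow> g x > 0"
    and g_antimono: "antimono_on {0..1} g"
    and g_diff: "g differentiable_on {0..1}"
    and g_int: "(g has_integral 1) {0..1}"
    and F_def: "\<And>x. x \<in> {0..1} \<Longrightarrow> F x = integral {0..x} g"
    and hazard_mono: "mono_on {0..<1} (\<lambda>x. g x / (1 - F x))"
    and eps: "\<epsilon> > 0"
  shows "\<exists>c>0. \<forall>\<^sub>F n in sequentially.
           measure (sample_space g n) {\<omega> \<in> space (sample_space g n). \<not> bad_event \<epsilon> n \<omega>}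
             \<ge> 1 - exp (- c * \<epsilon> * (ln (real n))\<^sup>2)"
proof -
  interpret decreasing_density g F
    using g_pos g_antimono differentiable_imp_continuous_on[OF g_diff] g_int F_def
    by unfold_locales (auto intro: less_imp_le)
  obtain c where c: "c > 0" and bound: "\<forall>\<^sub>F n in sequentially. 3 \<le> r_star \<epsilon> n \<and>
      real (n choose r_star \<epsilon> n) * sandwich_bound (r_star \<epsilon> n) \<le> exp (- c * \<epsilon> * (ln (real n))\<^sup>2)"
    using eventually_binomial_sandwich_bound_le[OF eps] by blast
  from bound have "\<forall>\<^sub>F n in sequentially.
      measure (sample_space g n) {\<omega> \<in> space (sample_space g n). \<not> bad_event \<epsilon> n \<omega>}
        \<ge> 1 - exp (- c * \<epsilon> * (ln (real n))\<^sup>2)"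
  proof eventually_elim
    case (elim n)
    interpret prob_space "sample_space g n" by (rule prob_space_sample_space)
    have "{\<omega> \<in> space (sample_space g n). \<not> bad_event \<epsilon> n \<omega>}
        = space (sample_space g n) - {\<omega> \<in> space (sample_space g n). bad_event \<epsilon> n \<omega>}" by auto
    then have "prob {\<omega> \<in> space (sample_space g n). \<not> bad_event \<epsilon> n \<omega>}
        = 1 - prob {\<omega> \<in> space (sample_space g n). bad_event \<epsilon> n \<omega>}"
      using prob_compl[OF sets_bad_event] by simp
    with elim measure_bad_event_le[of \<epsilon> n] show ?case by linarith
  qed
  with c show ?thesis by blast
qed

end
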